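(* Let $E$ be finite, $\Omega=E^{\mathbb{Z}}$ with left shift $S$, and fix a letter $\mathtt a\in E$; write $\mathbf{a}$ for the configuration with all coordinates equal to $\mathtt a$. (i) If $\phi:\Omega\to\mathbb{R}$ is continuous with the extensibility property and $\rho^\phi$ denotes its cocycle $\rho^\phi(\xi,\eta)=\lim_{n\to\infty}\sum_{i=-n}^{n}[\phi(S^i\xi)-\phi(S^i\eta)]$ (defined for $\xi,\eta$ differing at finitely many sites), then the family $\gamma^\phi=(\gamma^\phi_\Lambda)_{\Lambda\subset\mathbb{Z}\text{ finite}}$ given by $$\gamma^\phi_\Lambda(\omega_\Lambda|\omega_{\Lambda^c})=\Big(\sum_{\xi_\Lambda\in E^\Lambda}e^{\rho^\phi(\xi_\Lambda\omega_{\mathbb{Z}\setminus\Lambda},\,\omega)}\Big)^{-1},\qquad\omega\in\Omega,$$ is a translation-invariant Gibbsian specification. (ii) If $\gamma=(\gamma_\Lambda)$ is a translation-invariant Gibbsian specification on $\Omega$, then $$\phi_\gamma(\omega)=\log\frac{\gamma_{\{0\}}(\omega_0\,|\,\mathbf a_{-\infty}^{-1}\omega_1^{\infty})}{\gamma_{\{0\}}(\mathtt a\,|\,\mathbf a_{-\infty}^{-1}\omega_1^{\infty})},\qquad\omega\in\Omega,$$ is a continuous function with the extensibility property and $\gamma^{\phi_\gamma}=\gamma$.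
   Context: $E$ finite, discrete; $\Omega=E^{\mathbb{Z}}$ with product topology; $(S\omega)_i=\omega_{i+1}$. For $\omega\in\Omega$, $a\in E$, $\omega^a$ is the configuration equal to $a$ at $0$ and $\omega_k$ at $k\ne0$. A continuous $\phi$ has the extensibility property if for all $a,\tilde a\in E$, $\sum_{i=-n}^{n}[\phi(S^i\omega^a)-\phi(S^i\omega^{\tilde a})]$ converges uniformly in $\omega$ as $n\to\infty$ (then the limit $\rho^\phi(\xi,\eta)$ exists for all $\xi,\eta$ differing at finitely many sites). $\mathbf a_{-\infty}^{-1}\omega_1^\infty$ denotes the condition on sites $\ne0$ equal to $\mathtt a$ at negative sites and to $\omega_k$ at sites $k\ge1$; for finite $\Lambda$, $\xi_\Lambda\omega_{\mathbb{Z}\setminus\Lambda}$ equals $\xi$ on $\Lambda$ and $\omega$ elsewhere. A specification is a family $(\gamma_\Lambda)_{\Lambda\text{ finite}}$ of probabilities $\gamma_\Lambda(\cdot|\omega_{\Lambda^c})$ on $E^\Lambda$ depending only on $\omega_{\Lambda^c}$, consistent: with $\gamma_\Lambda(f|\omega)=\sum_{\xi_\Lambda}\gamma_\Lambda(\xi_\Lambda|\omega_{\Lambda^c})f(\xi_\Lambda\omega_{\Lambda^c})$, for finite $\Delta\subset\Lambda$, $\sum_{\xi_\Lambda}\gamma_\Lambda(\xi_\Lambda|\omega_{\Lambda^c})\gamma_\Delta(f|\xi_\Lambda\omega_{\Lambda^c})=\gamma_\Lambda(f|\omega)$. Gibbsian means non-null ($\inf_\omega\gamma_\Lambda(\omega_\Lambda|\omega_{\Lambda^c})>0$)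 and continuous ($\omega\mapsto\gamma_\Lambda(\omega_\Lambda|\omega_{\Lambda^c})$ continuous) for every finite $\Lambda$. Translation-invariant means $\gamma_{\Lambda+1}(\omega_{\Lambda+1}|\omega_{(\Lambda+1)^c})=\gamma_\Lambda((S\omega)_\Lambda|(S\omega)_{\Lambda^c})$ for all finite $\Lambda$ and $\omega$. *)

theory Defs
  imports "HOL-Analysis.Analysis"
begin

definition conf_top :: "(int \<Rightarrow> 'e) topology" where
  "conf_top = product_topology (\<lambda>_. discrete_topology UNIV) UNIV"

definition cont_conf :: "((int \<Rightarrow> 'e) \<Rightarrow> real) \<Rightarrow> bool" where
  "cont_conf f \<longleftrightarrow> continuous_map conf_top euclideanreal f"

definition shift :: "int \<Rightarrow> (int \<Rightarrow> 'e) \<Rightarrow> (int \<Rightarrow> 'e)" where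
  "shift i w = (\<lambda>k. w (k + i))"

text \<open>Configurations agreeing with w outside Lambda (i.e. xi_Lambda w_(Lambda^c)).\<close>
definition configs_on :: "int set \<Rightarrow> (int \<Rightarrow> 'e) \<Rightarrow> (int \<Rightarrow> 'e) set" where
  "configs_on L w = {x. \<forall>k. k \<notin> L \<longrightarrow> x k = w k}"

definition partial_sum :: "((int \<Rightarrow> 'e) \<Rightarrow> real) \<Rightarrow> (int \<Rightarrow> 'e) \<Rightarrow> (int \<Rightarrow> 'e) \<Rightarrow> nat \<Rightarrow> real" where
  "partial_sum phi x y n = (\<Sum>i\<in>{- int n..int n}. phi (shift i x) - phi (shift i y))"

definition extensible :: "((int \<Rightarrow> 'e) \<Rightarrow> real) \<Rightarrow> bool" where
  "extensible phi \<longleftrightarrow> (\<forall>a b. uniformly_convergent_on UNIV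
      (\<lambda>n w. partial_sum phi (w(0 := a)) (w(0 := b)) n))"

definition rho :: "((int \<Rightarrow> 'e) \<Rightarrow> real) \<Rightarrow> (int \<Rightarrow> 'e) \<Rightarrow> (int \<Rightarrow> 'e) \<Rightarrow> real" where
  "rho phi x y = lim (partial_sum phi x y)"

text \<open>A is_specification is represented by gam :: int set => config => real, where
  gam L w stands for gamma_L(w_L | w_(L^c)); only finite L are meaningful.\<close>

definition spec_exp :: "(int set \<Rightarrow> (int \<Rightarrow> 'e) \<Rightarrow> real) \<Rightarrow> int set \<Rightarrow> ((int \<Rightarrow> 'e) \<Rightarrow> real) \<Rightarrow> (int \<Rightarrow> 'e) \<Rightarrow> real" where
  "spec_exp gam L f w = (\<Sum>x\<in>configs_on L w. gam L x * f x)"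

definition is_specification :: "(int set \<Rightarrow> (int \<Rightarrow> 'e::finite) \<Rightarrow> real) \<Rightarrow> bool" where
  "is_specification gam \<longleftrightarrow>
     (\<forall>L w. finite L \<longrightarrow> gam L w \<ge> 0) \<and>
     (\<forall>L w. finite L \<longrightarrow> (\<Sum>x\<in>configs_on L w. gam L x) = 1) \<and>
     (\<forall>L D f w. finite L \<longrightarrow> D \<subseteq> L \<longrightarrow>
        (\<Sum>x\<in>configs_on L w. gam L x * spec_exp gam D f x) = spec_exp gam L f w)"

definition gibbsian :: "(int set \<Rightarrow> (int \<Rightarrow> 'e) \<Rightarrow> real) \<Rightarrow> bool" where
  "gibbsian gam \<longleftrightarrow>
     (\<forall>L. finite L \<longrightarrow> (INF w. gam L w) > 0) \<and>
     (\<forall>L. finite L \<longrightarrow> cont_conf (gam L))"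

definition transl_inv :: "(int set \<Rightarrow> (int \<Rightarrow> 'e) \<Rightarrow> real) \<Rightarrow> bool" where
  "transl_inv gam \<longleftrightarrow> (\<forall>L w. finite L \<longrightarrow> gam ((\<lambda>i. i + 1) ` L) w = gam L (shift 1 w))"

definition gibbs_spec :: "((int \<Rightarrow> 'e) \<Rightarrow> real) \<Rightarrow> int set \<Rightarrow> (int \<Rightarrow> 'e) \<Rightarrow> real" where
  "gibbs_spec phi L w = inverse (\<Sum>x\<in>configs_on L w. exp (rho phi x w))"

text \<open>The boundary condition a_(-inf)^(-1) w_1^inf, with the value w_0 kept at site 0.\<close>
definition aleft :: "'e \<Rightarrow> (int \<Rightarrow> 'e) \<Rightarrow> (int \<Rightarrow> 'e)" where
  "aleft a w = (\<lambda>k. if k < 0 then a else w k)"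

definition phi_of_spec :: "'e \<Rightarrow> (int set \<Rightarrow> (int \<Rightarrow> 'e) \<Rightarrow> real) \<Rightarrow> (int \<Rightarrow> 'e) \<Rightarrow> real" where
  "phi_of_spec a gam w = ln (gam {0} (aleft a w) / gam {0} ((aleft a w)(0 := a)))"

end

theory Submission
  imports Defs
begin

text \<open>
  (i) For finite \<open>L\<close>, the partial sums of \<open>rho phi (override_on w z L) w\<close> converge uniformly
  in \<open>w\<close>: extensibility gives this for one site at \<open>0\<close>; a site \<open>j\<close> is reached by a
  shift, which moves the summation window by \<open>\<bar>j\<bar>\<close> terms at each end, and these vanish
  uniformly by uniform continuity of \<open>phi\<close>; a finite volume is reached one site at a time.
  So \<open>rho phi\<close> is an additive, shift-invariant cocycle, continuous in the boundary condition
  as a uniform limit, hence bounded by compactness. Additivity gives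
  \<open>gibbs_spec phi L x = exp (rho phi x w) * gibbs_spec phi L w\<close> for \<open>x\<close> agreeing with \<open>w\<close>
  off \<open>L\<close>, from which normalisation and detailed balance, and hence consistency, follow.

  (ii) Translation invariance and consistency turn \<open>phi_of_spec a gam (shift i x)\<close> into the
  log-ratio of \<open>gam L\<close> at \<open>x\<close> with all sites left of \<open>i\<close>, resp. of \<open>i + 1\<close>, set to \<open>a\<close>.
  The partial sums therefore telescope to a log-ratio of kernels at configurations that are
  \<open>a\<close> left of \<open>-n\<close>; by continuity of the kernels they converge, uniformly, to
  \<open>ln (gam L x) - ln (gam L w)\<close>, and normalisation of \<open>gam\<close> gives back \<open>gam\<close>.
\<close>

section \<open>Topology of the configuration space\<close>

definition agree :: "nat \<Rightarrow> (int \<Rightarrow> 'e) \<Rightarrow> (int \<Rightarrow> 'e) \<Rightarrow> bool" where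
  "agree N x y \<longleftrightarrow> (\<forall>k. \<bar>k\<bar> \<le> int N \<longrightarrow> x k = y k)"

lemma agree_refl [simp]: "agree N x x"
  by (simp add: agree_def)

lemma agree_trans: "agree N x y \<Longrightarrow> agree N y z \<Longrightarrow> agree N x z"
  by (simp add: agree_def)

lemma agree_mono: "agree N x y \<Longrightarrow> M \<le> N \<Longrightarrow> agree M x y"
  by (auto simp: agree_def)

lemma topspace_conf_top [simp]: "topspace conf_top = UNIV"
  by (simp add: conf_top_def PiE_UNIV_domain)

lemma compact_space_conf_top: "compact_space (conf_top :: (int \<Rightarrow> 'e::finite) topology)"
  unfolding conf_top_def
  by (simp add: compact_space_product_topology compact_space_discrete_topology)

lemma finite_int_set_bounded: "finite (F :: int set) \<Longrightarrow> \<exists>N. \<forall>i\<in>F. \<bar>i\<bar> \<le> int N"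
  by (rule exI[of _ "nat (Max (insert 0 (abs ` F)))"]) (auto simp: le_nat_iff)

lemma openin_conf_top_cylinder: "openin conf_top {y. agree N x y}"
proof -
  let ?U = "\<lambda>k. if \<bar>k\<bar> \<le> int N then {x k} else UNIV"
  have "{y. agree N x y} = PiE UNIV ?U"
    by (force simp: agree_def PiE_UNIV_domain Pi_iff split: if_splits)
  moreover have "finite {k. ?U k \<noteq> UNIV}"
    by (rule finite_subset[of _ "{- int N..int N}"]) (auto split: if_splits)
  ultimately show ?thesis
    unfolding conf_top_def by (simp add: openin_PiE_gen)
qed

lemma openin_conf_top_cylinder_subset:
  assumes "openin conf_top U" "x \<in> U"
  shows "\<exists>N. {y. agree N x y} \<subseteq> U"
proof -
  obtain V where V: "finite {i. V i \<noteq> UNIV}" "x \<in> PiE UNIV V" "PiE UNIV V \<subseteq> U"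
    using assms unfolding conf_top_def openin_product_topology_alt by force
  obtain N where N: "\<forall>i\<in>{i. V i \<noteq> UNIV}. \<bar>i\<bar> \<le> int N"
    using finite_int_set_bounded[OF V(1)] by blast
  have "y i \<in> V i" if "agree N x y" for y i
  proof (cases "V i = UNIV")
    case False
    then have "y i = x i"
      using that N by (auto simp: agree_def)
    then show ?thesis
      using V(2) by (auto simp: PiE_UNIV_domain)
  qed simp
  then have "{y. agree N x y} \<subseteq> PiE UNIV V"
    by (auto simp: PiE_UNIV_domain)
  then show ?thesis
    using V(3) by blast
qed

text \<open>Uniform continuity follows from compactness: finitely many cylinders on which \<open>f\<close>
  oscillates by less than \<open>e/2\<close> cover the space, and the largest of their windows works.\<close>

lemma cont_conf_uniform:
  fixes f :: "(int \<Rightarrow> 'e::finite) \<Rightarrow> real"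
  assumes "cont_conf f" "e > 0"
  shows "\<exists>N. \<forall>x y. agree N x y \<longrightarrow> \<bar>f x - f y\<bar> < e"
proof -
  have "\<exists>N. \<forall>y. agree N x y \<longrightarrow> \<bar>f y - f x\<bar> < e/2" for x
  proof -
    have "openin conf_top {y \<in> topspace conf_top. f y \<in> {f x - e/2 <..< f x + e/2}}"
      using assms(1) unfolding cont_conf_def by (intro openin_continuous_map_preimage) auto
    then obtain N where N: "{y. agree N x y} \<subseteq> {y. f y \<in> {f x - e/2 <..< f x + e/2}}"
      using openin_conf_top_cylinder_subset[of _ x] assms(2) by fastforce
    have "\<bar>f y - f x\<bar> < e/2" if "agree N x y" for y
      using subsetD[OF N, of y] that unfolding abs_less_iff by auto
    then show ?thesis
      by blast
  qed
  then obtain N where N: "\<And>x y. agree (N x) x y \<Longrightarrow> \<bar>f y - f x\<bar> < e/2"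
    by metis
  let ?C = "(\<lambda>x. {y. agree (N x) x y}) ` UNIV"
  have "\<forall>C\<in>?C. openin conf_top C" "topspace conf_top \<subseteq> \<Union>?C"
    using openin_conf_top_cylinder by (auto intro: agree_refl)
  then obtain F where F: "finite F" "F \<subseteq> ?C" "topspace conf_top \<subseteq> \<Union>F"
    using compact_space_conf_top[unfolded compact_space_alt, rule_format, of ?C] by blast
  then obtain X where X: "finite X" "F = (\<lambda>x. {y. agree (N x) x y}) ` X"
    by (meson finite_subset_image)
  define M where "M = Max (insert 0 (N ` X))"
  have NM: "x0 \<in> X \<Longrightarrow> N x0 \<le> M" for x0
    using X unfolding M_def by auto
  show ?thesis
  proof (intro exI[of _ M] allI impI)
    fix x y :: "int \<Rightarrow> 'e" assume xy: "agree M x y"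
    obtain x0 where x0: "x0 \<in> X" "agree (N x0) x0 x"
      using F(3) X(2) by auto
    then have "agree (N x0) x0 y"
      using agree_trans agree_mono[OF xy NM] by blast
    then show "\<bar>f x - f y\<bar> < e"
      using N[OF x0(2)] N[of x0 y] by linarith
  qed
qed

lemma cont_conf_bounded:
  fixes f :: "(int \<Rightarrow> 'e::finite) \<Rightarrow> real"
  assumes "cont_conf f"
  shows "\<exists>B. \<forall>x. \<bar>f x\<bar> \<le> B"
proof -
  have "compactin euclideanreal (f ` topspace conf_top)"
    using assms compact_space_conf_top unfolding cont_conf_def compact_space_def
    by (rule image_compactin[rotated])
  then show ?thesis
    by (auto dest!: compact_imp_bounded simp: bounded_real)
qed

lemma continuous_map_conf_top_coordinatewise:
  assumes "\<And>k. (\<exists>c. \<forall>x. g x k = c) \<or> (\<exists>j. \<forall>x. g x k = x j)"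
  shows "continuous_map conf_top conf_top g"
  unfolding conf_top_def continuous_map_componentwise_UNIV
proof
  fix k
  from assms[of k] show "continuous_map (product_topology (\<lambda>_. discrete_topology UNIV) UNIV)
      (discrete_topology UNIV) (\<lambda>x. g x k)"
  proof
    assume "\<exists>c. \<forall>x. g x k = c"
    then show ?thesis by auto
  next
    assume "\<exists>j. \<forall>x. g x k = x j"
    then obtain j where "(\<lambda>x. g x k) = (\<lambda>x. x j)" by auto
    then show ?thesis
      using continuous_map_product_projection[of j UNIV "\<lambda>_. discrete_topology UNIV"] by simp
  qed
qed

lemma continuous_map_shift: "continuous_map conf_top conf_top (shift i)"
  by (rule continuous_map_conf_top_coordinatewise) (auto simp: shift_def)

lemma continuous_map_fun_upd: "continuous_map conf_top conf_top (\<lambda>x. x(j := b))"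
  by (rule continuous_map_conf_top_coordinatewise) auto

lemma continuous_map_override_on: "continuous_map conf_top conf_top (\<lambda>x. override_on x z L)"
  by (rule continuous_map_conf_top_coordinatewise) (auto simp: override_on_def)

lemma cont_conf_compose:
  "cont_conf f \<Longrightarrow> continuous_map conf_top conf_top g \<Longrightarrow> cont_conf (\<lambda>x. f (g x))"
  unfolding cont_conf_def using continuous_map_compose[of conf_top conf_top g] by (simp add: o_def)

lemma cont_conf_compose_continuous_on:
  assumes "cont_conf f" "continuous_on S h" "range f \<subseteq> S"
  shows "cont_conf (\<lambda>x. h (f x))"
proof -
  have "continuous_map conf_top (top_of_set S) f"
    using assms unfolding cont_conf_def by (auto simp: continuous_map_in_subtopology)
  then show ?thesis
    using assms(2) continuous_map_compose[of conf_top "top_of_set S" f euclideanreal h]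
    unfolding cont_conf_def by (simp add: o_def)
qed

lemma cont_conf_uniform_limit:
  assumes "\<And>n. cont_conf (F n)" "uniform_limit UNIV F g sequentially"
  shows "cont_conf g"
  using assms unfolding cont_conf_def
  by (intro Met_TC.continuous_map_uniform_limit[where F = sequentially and f = F, simplified])
    (auto simp: uniform_limit_iff)

section \<open>Uniform limits and summation windows\<close>

lemma uniformly_convergent_on_select:
  fixes h :: "'a \<Rightarrow> 'c::finite" and G :: "'c \<Rightarrow> nat \<Rightarrow> 'a \<Rightarrow> 'b::metric_space"
  assumes "\<And>c. uniformly_convergent_on UNIV (G c)"
  shows "uniformly_convergent_on UNIV (\<lambda>n w. G (h w) n w)"
proof -
  obtain l where l: "\<And>c. uniform_limit UNIV (G c) (l c) sequentially"
    using assms unfolding uniformly_convergent_on_def by metis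
  have "uniform_limit UNIV (\<lambda>n w. G (h w) n w) (\<lambda>w. l (h w) w) sequentially"
  proof (rule uniform_limitI)
    fix e :: real assume "e > 0"
    then have "\<forall>\<^sub>F n in sequentially. \<forall>c. \<forall>w\<in>UNIV. dist (G c n w) (l c w) < e"
      using uniform_limitD[OF l] by (intro eventually_all_finite) simp
    then show "\<forall>\<^sub>F n in sequentially. \<forall>w\<in>UNIV. dist (G (h w) n w) (l (h w) w) < e"
      by eventually_elim blast
  qed
  then show ?thesis
    by (rule uniformly_convergentI)
qed

lemma uniformly_convergent_on_precompose:
  assumes "uniformly_convergent_on UNIV F"
  shows "uniformly_convergent_on UNIV (\<lambda>n x. F n (h x))"
proof -
  obtain l where "uniform_limit UNIV F l sequentially"
    using assms unfolding uniformly_convergent_on_def by blast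
  then have "uniform_limit UNIV (\<lambda>n x. F n (h x)) (\<lambda>x. l (h x)) sequentially"
    by (rule uniform_limit_compose') simp
  then show ?thesis
    by (rule uniformly_convergentI)
qed

lemma sum_atLeastAtMost_int_shift:
  "(\<Sum>i\<in>{a..b}. g (i + d)) = (\<Sum>m\<in>{a + d..b + d::int}. g m)"
  by (rule sum.reindex_bij_witness[of _ "\<lambda>m. m - d" "\<lambda>i. i + d"]) auto

lemma sum_atLeastAtMost_int_telescope:
  fixes g :: "int \<Rightarrow> 'a::ab_group_add"
  assumes "p \<le> q + 1"
  shows "(\<Sum>i\<in>{p..q}. g (i + 1) - g i) = g (q + 1) - g p"
proof (rule int_ge_induct[where P = "\<lambda>q. (\<Sum>i\<in>{p..q}. g (i + 1) - g i) = g (q + 1) - g p"])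
  show "p - 1 \<le> q"
    using assms by simp
next
  fix q assume "p - 1 \<le> q" "(\<Sum>i\<in>{p..q}. g (i + 1) - g i) = g (q + 1) - g p"
  moreover have "{p..q + 1} = insert (q + 1) {p..q}"
    using \<open>p - 1 \<le> q\<close> by auto
  ultimately show "(\<Sum>i\<in>{p..q + 1}. g (i + 1) - g i) = g (q + 1 + 1) - g p"
    by simp
qed simp

text \<open>Moving a summation window by \<open>d\<close> changes the sum only by \<open>2 \<bar>d\<bar>\<close> terms far from the
  origin.\<close>

lemma uniform_limit_sum_shifted_window:
  fixes T :: "'a \<Rightarrow> int \<Rightarrow> real"
  assumes far: "\<And>e. e > 0 \<Longrightarrow> \<exists>K. \<forall>u m. K \<le> \<bar>m\<bar> \<longrightarrow> \<bar>T u m\<bar> < e"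
  shows "uniform_limit UNIV
    (\<lambda>n u. (\<Sum>m\<in>{- int n + d..int n + d}. T u m) - (\<Sum>m\<in>{- int n..int n}. T u m)) (\<lambda>_. 0) sequentially"
proof -
  define W where "W d n u = (\<Sum>m\<in>{- int n + d..int n + d}. T u m)" for d n u
  have far_seq: "uniform_limit UNIV (\<lambda>n u. T u (s * int n + c)) (\<lambda>_. 0) sequentially"
    if "\<bar>s\<bar> = 1" for s c
  proof (rule uniform_limitI)
    fix e :: real assume "e > 0"
    then obtain K where K: "\<And>u m. K \<le> \<bar>m\<bar> \<Longrightarrow> \<bar>T u m\<bar> < e"
      using far by blast
    have "K \<le> \<bar>s * int n + c\<bar>" if "n \<ge> nat (K + \<bar>c\<bar>)" for n
      using that \<open>\<bar>s\<bar> = 1\<close> by (auto simp: abs_if split: if_splits)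
    then show "\<forall>\<^sub>F n in sequentially. \<forall>u\<in>UNIV. dist (T u (s * int n + c)) 0 < e"
      unfolding eventually_sequentially using K by (auto simp: dist_real_def)
  qed
  have far_up: "uniform_limit UNIV (\<lambda>n u. T u (int n + c)) (\<lambda>_. 0) sequentially" for c
    using far_seq[of 1 c] by simp
  have far_down: "uniform_limit UNIV (\<lambda>n u. T u (c - int n)) (\<lambda>_. 0) sequentially" for c
    using far_seq[of "- 1" c] by simp
  have step: "W (d + 1) n u = W d n u + (T u (int n + (d + 1)) - T u (d - int n))" for d n u
  proof -
    have "W (d + 1) n u = (\<Sum>i\<in>{- int n + d..int n + d}. T u (i + 1))"
      unfolding W_def sum_atLeastAtMost_int_shift by (simp add: algebra_simps)
    also have "\<dots> = W d n u + (\<Sum>i\<in>{- int n + d..int n + d}. T u (i + 1) - T u i)"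
      unfolding W_def sum_subtractf by simp
    finally show ?thesis
      by (simp add: sum_atLeastAtMost_int_telescope algebra_simps)
  qed
  have "uniform_limit UNIV (\<lambda>n u. W d n u - W 0 n u) (\<lambda>_. 0) sequentially"
  proof (induction d rule: int_induct[where k = 0])
    case base
    then show ?case by (simp add: uniform_limit_const)
  next
    case (step1 d)
    have "(\<lambda>n u. W (d + 1) n u - W 0 n u)
        = (\<lambda>n u. (W d n u - W 0 n u) + (T u (int n + (d + 1)) - T u (d - int n)))"
      by (simp add: step fun_eq_iff)
    then show ?case
      using uniform_limit_add[OF step1(2) uniform_limit_minus[OF far_up far_down]] by simp
  next
    case (step2 d)
    have "(\<lambda>n u. W (d - 1) n u - W 0 n u)
        = (\<lambda>n u. (W d n u - W 0 n u) - (T u (int n + d) - T u (d - 1 - int n)))"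
      using step[of "d - 1"] by (simp add: fun_eq_iff)
    then show ?case
      using uniform_limit_minus[OF step2(2) uniform_limit_minus[OF far_up far_down]] by simp
  qed
  then show ?thesis
    unfolding W_def by simp
qed

section \<open>Configurations agreeing outside a finite volume\<close>

lemma configs_on_self [simp]: "w \<in> configs_on L w"
  by (simp add: configs_on_def)

lemma configs_on_sym: "x \<in> configs_on L y \<longleftrightarrow> y \<in> configs_on L x"
  by (auto simp: configs_on_def)

lemma configs_on_eq: "x \<in> configs_on L w \<Longrightarrow> configs_on L x = configs_on L w"
  by (auto simp: configs_on_def)

lemma configs_on_mono: "D \<subseteq> L \<Longrightarrow> configs_on D x \<subseteq> configs_on L x"
  by (auto simp: configs_on_def)

lemma override_on_configs_on: "x \<in> configs_on L y \<Longrightarrow> override_on y x L = x"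
  by (auto simp: configs_on_def override_on_def)

lemma configs_on_eq_image:
  "configs_on L w = (\<lambda>z. override_on w z L) ` PiE L (\<lambda>_. UNIV)"
proof (intro set_eqI iffI)
  fix x assume "x \<in> configs_on L w"
  then have "x = override_on w (restrict x L) L"
    by (auto simp: configs_on_def override_on_def)
  then show "x \<in> (\<lambda>z. override_on w z L) ` PiE L (\<lambda>_. UNIV)"
    by auto
qed (auto simp: configs_on_def)

lemma finite_configs_on: "finite L \<Longrightarrow> finite (configs_on L (w :: int \<Rightarrow> 'e::finite))"
  unfolding configs_on_eq_image by (intro finite_imageI finite_PiE) auto

lemma sum_configs_on:
  "sum g (configs_on L w) = (\<Sum>z\<in>PiE L (\<lambda>_. UNIV). g (override_on w z L))"
proof -
  have "inj_on (\<lambda>z. override_on w z L) (PiE L (\<lambda>_. UNIV))"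
  proof (rule inj_onI)
    fix z z' assume z: "z \<in> PiE L (\<lambda>_. UNIV)" "z' \<in> PiE L (\<lambda>_. UNIV)"
      and eq: "override_on w z L = override_on w z' L"
    show "z = z'"
    proof (rule PiE_ext[OF z])
      fix i assume "i \<in> L"
      then show "z i = z' i"
        using fun_cong[OF eq, of i] by simp
    qed
  qed
  then show ?thesis
    unfolding configs_on_eq_image by (simp add: sum.reindex)
qed

lemma shift_shift: "shift i (shift j x) = shift (i + j) x"
  by (simp add: shift_def ac_simps)

lemma shift_0 [simp]: "shift 0 x = x"
  by (simp add: shift_def)

lemma shift_in_configs_on_iff:
  "shift j x \<in> configs_on L (shift j w) \<longleftrightarrow> x \<in> configs_on ((\<lambda>i. i + j) ` L) w"
proof
  assume x: "shift j x \<in> configs_on L (shift j w)"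
  show "x \<in> configs_on ((\<lambda>i. i + j) ` L) w"
    unfolding configs_on_def
  proof (intro CollectI allI impI)
    fix k assume "k \<notin> (\<lambda>i. i + j) ` L"
    then have "k - j \<notin> L"
      by force
    then show "x k = w k"
      using x unfolding configs_on_def shift_def by (auto dest: spec[of _ "k - j"])
  qed
qed (force simp: configs_on_def shift_def)

lemma bij_betw_shift_configs_on:
  "bij_betw (shift j) (configs_on ((\<lambda>i. i + j) ` L) w) (configs_on L (shift j w))"
proof (rule bij_betw_byWitness[of _ "shift (- j)"])
  show "shift (- j) ` configs_on L (shift j w) \<subseteq> configs_on ((\<lambda>i. i + j) ` L) w"
    using shift_in_configs_on_iff[of j "shift (- j) _" L w] by (auto simp: shift_shift)
qed (auto simp: shift_shift shift_in_configs_on_iff)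

section \<open>Specifications and detailed balance\<close>

text \<open>Summing over \<open>configs_on D x\<close> and then over \<open>configs_on L w\<close> is a sum over the pairs
  related by the symmetric relation \<open>z \<in> configs_on D x\<close>; detailed balance lets the two
  summations be exchanged.\<close>

lemma is_specificationI_detailed_balance:
  fixes gam :: "int set \<Rightarrow> (int \<Rightarrow> 'e::finite) \<Rightarrow> real"
  assumes nonneg: "\<And>L w. finite L \<Longrightarrow> gam L w \<ge> 0"
    and norm: "\<And>L w. finite L \<Longrightarrow> (\<Sum>x\<in>configs_on L w. gam L x) = 1"
    and balance: "\<And>L D x z. finite L \<Longrightarrow> D \<subseteq> L \<Longrightarrow> z \<in> configs_on D x \<Longrightarrow>
      gam L x * gam D z = gam L z * gam D x"
  shows "is_specification gam"
  unfolding is_specification_def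
proof (intro conjI allI impI)
  fix L D :: "int set" and f and w :: "int \<Rightarrow> 'e"
  assume L: "finite L" and DL: "D \<subseteq> L"
  have D: "finite D"
    using L DL by (rule finite_subset[rotated])
  let ?A = "configs_on L w"
  have nested: "{z \<in> ?A. z \<in> configs_on D x} = configs_on D x" if "x \<in> ?A" for x
    using configs_on_mono[OF DL, of x] configs_on_eq[OF that] by auto
  have "(\<Sum>x\<in>?A. gam L x * spec_exp gam D f x)
      = (\<Sum>x\<in>?A. \<Sum>z\<in>{z \<in> ?A. z \<in> configs_on D x}. gam L z * gam D x * f z)"
  proof (rule sum.cong[OF refl])
    fix x assume "x \<in> ?A"
    have "gam L x * (gam D z * f z) = gam L z * gam D x * f z" if "z \<in> configs_on D x" for z
      using balance[OF L DL that] by simp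
    then show "gam L x * spec_exp gam D f x
        = (\<Sum>z\<in>{z \<in> ?A. z \<in> configs_on D x}. gam L z * gam D x * f z)"
      unfolding nested[OF \<open>x \<in> ?A\<close>] spec_exp_def sum_distrib_left by (auto intro!: sum.cong)
  qed
  also have "\<dots> = (\<Sum>z\<in>?A. \<Sum>x\<in>{x \<in> ?A. z \<in> configs_on D x}. gam L z * gam D x * f z)"
    by (rule sum.swap_restrict) (simp_all add: finite_configs_on L)
  also have "\<dots> = (\<Sum>z\<in>?A. gam L z * f z * (\<Sum>x\<in>configs_on D z. gam D x))"
  proof (rule sum.cong[OF refl])
    fix z assume "z \<in> ?A"
    then have "{x \<in> ?A. z \<in> configs_on D x} = configs_on D z"
      using nested configs_on_sym by blast
    then show "(\<Sum>x\<in>{x \<in> ?A. z \<in> configs_on D x}. gam L z * gam D x * f z)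
        = gam L z * f z * (\<Sum>x\<in>configs_on D z. gam D x)"
      by (simp add: sum_distrib_left mult_ac)
  qed
  also have "\<dots> = spec_exp gam L f w"
    by (simp add: norm[OF D] spec_exp_def)
  finally show "(\<Sum>x\<in>?A. gam L x * spec_exp gam D f x) = spec_exp gam L f w" .
qed (use nonneg norm in auto)

lemma specification_split:
  fixes gam :: "int set \<Rightarrow> (int \<Rightarrow> 'e::finite) \<Rightarrow> real"
  assumes spec: "is_specification gam" and L: "finite L" and DL: "D \<subseteq> L"
  shows "gam L x = gam D x * (\<Sum>z\<in>configs_on D x. gam L z)"
proof -
  define f where "f z = (if z = x then 1 else 0 :: real)" for z
  have D: "finite D"
    using L DL by (rule finite_subset[rotated])
  have "spec_exp gam D f z = (if z \<in> configs_on D x then gam D x else 0)" for z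
    using finite_configs_on[OF D, of z]
    by (simp add: spec_exp_def f_def configs_on_sym[of z] if_distrib[of "\<lambda>t. _ * t"] cong: if_cong)
  then have "gam L z * spec_exp gam D f z = (if z \<in> configs_on D x then gam D x * gam L z else 0)"
    for z by simp
  then have "(\<Sum>z\<in>configs_on L x. gam L z * spec_exp gam D f z)
      = (\<Sum>z\<in>{z \<in> configs_on L x. z \<in> configs_on D x}. gam D x * gam L z)"
    by (simp add: sum.inter_filter finite_configs_on[OF L])
  also have "{z \<in> configs_on L x. z \<in> configs_on D x} = configs_on D x"
    using configs_on_mono[OF DL, of x] by blast
  also have "(\<Sum>z\<in>configs_on L x. gam L z * spec_exp gam D f z) = spec_exp gam L f x"
    using spec L DL unfolding is_specification_def by blast
  also have "spec_exp gam L f x = gam L x"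
    using finite_configs_on[OF L, of x]
    by (simp add: spec_exp_def f_def if_distrib[of "\<lambda>t. _ * t"] cong: if_cong)
  finally show ?thesis
    by (simp add: sum_distrib_left)
qed

lemma specification_detailed_balance:
  fixes gam :: "int set \<Rightarrow> (int \<Rightarrow> 'e::finite) \<Rightarrow> real"
  assumes "is_specification gam" "finite L" "D \<subseteq> L" "z \<in> configs_on D x"
  shows "gam L x * gam D z = gam L z * gam D x"
  using specification_split[OF assms(1-3), of x] specification_split[OF assms(1-3), of z]
    configs_on_eq[OF assms(4)] by simp

lemma transl_inv_singleton:
  assumes "transl_inv gam"
  shows "gam {i} w = gam {0} (shift i w)"
proof -
  have step: "gam {i + 1} w = gam {i} (shift 1 w)" for i w
    using assms unfolding transl_inv_def by (metis finite.emptyI finite.insertI image_empty image_insert)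
  show ?thesis
  proof (induction i arbitrary: w rule: int_induct[where k = 0])
    case (step1 i)
    have "gam {i + 1} w = gam {0} (shift i (shift 1 w))"
      by (simp only: step step1(2))
    then show ?case
      by (simp add: shift_shift)
  next
    case (step2 i)
    have "gam {i - 1} w = gam {i} (shift (- 1) w)"
      using step[of "i - 1" "shift (- 1) w"] by (simp add: shift_shift)
    also have "\<dots> = gam {0} (shift (i - 1) w)"
      using step2 by (simp add: shift_shift)
    finally show ?case .
  qed simp
qed

section \<open>The cocycle of an extensible potential\<close>

lemma partial_sum_trans: "partial_sum phi x y n + partial_sum phi y z n = partial_sum phi x z n"
  unfolding partial_sum_def by (simp add: sum.distrib[symmetric])

lemma partial_sum_self [simp]: "partial_sum phi x x n = 0"
  by (simp add: partial_sum_def)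

lemma partial_sum_shift:
  "partial_sum phi (shift j x) (shift j y) n
    = (\<Sum>m\<in>{- int n + j..int n + j}. phi (shift m x) - phi (shift m y))"
  unfolding partial_sum_def shift_shift
  by (rule sum_atLeastAtMost_int_shift[of "\<lambda>m. phi (shift m x) - phi (shift m y)"])

lemma uniform_limit_partial_sum_shift:
  fixes phi :: "(int \<Rightarrow> 'e::finite) \<Rightarrow> real" and x y :: "'a \<Rightarrow> int \<Rightarrow> 'e"
  assumes phi: "cont_conf phi" and eq_far: "\<And>u k. K0 < \<bar>k\<bar> \<Longrightarrow> x u k = y u k"
  shows "uniform_limit UNIV
    (\<lambda>n u. partial_sum phi (shift j (x u)) (shift j (y u)) n - partial_sum phi (x u) (y u) n)
    (\<lambda>_. 0) sequentially"
proof -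
  have "\<exists>K. \<forall>u m. K \<le> \<bar>m\<bar> \<longrightarrow> \<bar>phi (shift m (x u)) - phi (shift m (y u))\<bar> < e" if e: "e > 0" for e
  proof -
    obtain N where N: "\<And>v v'. agree N v v' \<Longrightarrow> \<bar>phi v - phi v'\<bar> < e"
      using cont_conf_uniform[OF phi e] by blast
    have "agree N (shift m (x u)) (shift m (y u))" if "int N + K0 + 1 \<le> \<bar>m\<bar>" for u m
      unfolding agree_def shift_def
    proof (intro allI impI)
      fix k assume "\<bar>k\<bar> \<le> int N"
      with that have "K0 < \<bar>k + m\<bar>"
        by linarith
      then show "x u (k + m) = y u (k + m)"
        by (rule eq_far)
    qed
    then show ?thesis
      using N by blast
  qed
  then show ?thesis
    using uniform_limit_sum_shifted_window[of "\<lambda>u m. phi (shift m (x u)) - phi (shift m (y u))" j]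
    unfolding partial_sum_shift by (simp add: partial_sum_def)
qed

locale extensible_potential =
  fixes phi :: "(int \<Rightarrow> 'e::finite) \<Rightarrow> real"
  assumes cont: "cont_conf phi" and ext: "extensible phi"
begin

lemma uniformly_convergent_partial_sum_upd_upd:
  "uniformly_convergent_on UNIV (\<lambda>n v. partial_sum phi (v(j := b)) (v(j := c)) n)"
proof -
  let ?F = "\<lambda>n u. partial_sum phi (u(0 := b)) (u(0 := c)) n"
  let ?G = "\<lambda>n u. partial_sum phi (shift (- j) (u(0 := b))) (shift (- j) (u(0 := c))) n"
  obtain l where "uniform_limit UNIV ?F l sequentially"
    using ext unfolding extensible_def uniformly_convergent_on_def by blast
  moreover have "uniform_limit UNIV (\<lambda>n u. ?G n u - ?F n u) (\<lambda>_. 0) sequentially"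
    by (rule uniform_limit_partial_sum_shift[OF cont, of 0]) simp
  ultimately have "uniform_limit UNIV ?G l sequentially"
    using uniform_limit_add by fastforce
  then have "uniformly_convergent_on UNIV ?G"
    by (rule uniformly_convergentI)
  then have "uniformly_convergent_on UNIV (\<lambda>n v. ?G n (shift j v))"
    by (rule uniformly_convergent_on_precompose)
  moreover have "shift (- j) ((shift j v)(0 := e)) = v(j := e)" for v and e :: 'e
    by (auto simp: shift_def fun_eq_iff)
  ultimately show ?thesis
    by simp
qed

lemma uniformly_convergent_partial_sum_upd:
  "uniformly_convergent_on UNIV (\<lambda>n v. partial_sum phi (v(j := b)) v n)"
  using uniformly_convergent_on_select[of "\<lambda>c n v. partial_sum phi (v(j := b)) (v(j := c)) n" "\<lambda>v. v j"]
    uniformly_convergent_partial_sum_upd_upd by simp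

lemma uniformly_convergent_partial_sum_override:
  assumes "finite L"
  shows "uniformly_convergent_on UNIV (\<lambda>n w. partial_sum phi (override_on w z L) w n)"
  using assms
proof (induction L rule: finite_induct)
  case (insert j L)
  have "uniformly_convergent_on UNIV
      (\<lambda>n w. partial_sum phi ((override_on w z L)(j := z j)) (override_on w z L) n)"
    using uniformly_convergent_on_precompose[OF uniformly_convergent_partial_sum_upd[of j "z j"],
        of "\<lambda>w. override_on w z L"]
    by simp
  from uniformly_convergent_add[OF this insert.IH]
  have "uniformly_convergent_on UNIV (\<lambda>n w. partial_sum phi ((override_on w z L)(j := z j)) w n)"
    by (simp add: partial_sum_trans)
  then show ?case
    by (simp only: override_on_insert)
qed simp

lemma uniform_limit_partial_sum_rho:
  assumes "finite L"
  shows "uniform_limit UNIV (\<lambda>n w. partial_sum phi (override_on w z L) w n)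
    (\<lambda>w. rho phi (override_on w z L) w) sequentially"
  using uniformly_convergent_partial_sum_override[OF assms]
  unfolding uniformly_convergent_uniform_limit_iff rho_def .

lemma partial_sum_tendsto_rho:
  assumes "finite L" "x \<in> configs_on L y"
  shows "partial_sum phi x y \<longlonglongrightarrow> rho phi x y"
  using tendsto_uniform_limitI[OF uniform_limit_partial_sum_rho[OF assms(1), of x], of y]
  by (simp add: override_on_configs_on[OF assms(2)])

lemma rho_cocycle:
  assumes L: "finite L" and "x \<in> configs_on L w" "y \<in> configs_on L w" "z \<in> configs_on L w"
  shows "rho phi x z = rho phi x y + rho phi y z"
proof -
  have "x \<in> configs_on L y" "y \<in> configs_on L z" "x \<in> configs_on L z"
    using assms(2-4) configs_on_eq by blast+
  then have "(\<lambda>n. partial_sum phi x y n + partial_sum phi y z n) \<longlonglongrightarrow> rho phi x y + rho phi y z"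
    by (intro tendsto_add partial_sum_tendsto_rho[OF L])
  then have "partial_sum phi x z \<longlonglongrightarrow> rho phi x y + rho phi y z"
    by (simp add: partial_sum_trans)
  moreover have "partial_sum phi x z \<longlonglongrightarrow> rho phi x z"
    using L \<open>x \<in> configs_on L z\<close> by (rule partial_sum_tendsto_rho)
  ultimately show ?thesis
    by (rule LIMSEQ_unique[symmetric])
qed

lemma rho_shift:
  assumes L: "finite L" and x: "x \<in> configs_on L y"
  shows "rho phi (shift j x) (shift j y) = rho phi x y"
proof -
  obtain N where "\<forall>i\<in>L. \<bar>i\<bar> \<le> int N"
    using finite_int_set_bounded[OF L] by blast
  then have "uniform_limit UNIV
      (\<lambda>n (_::unit). partial_sum phi (shift j x) (shift j y) n - partial_sum phi x y n) (\<lambda>_. 0) sequentially"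
    using x by (intro uniform_limit_partial_sum_shift[OF cont, of "int N"]) (force simp: configs_on_def)
  from tendsto_uniform_limitI[OF this, of "()"]
  have "(\<lambda>n. partial_sum phi (shift j x) (shift j y) n - partial_sum phi x y n) \<longlonglongrightarrow> 0"
    by simp
  from tendsto_add[OF this partial_sum_tendsto_rho[OF assms]]
  have "partial_sum phi (shift j x) (shift j y) \<longlonglongrightarrow> rho phi x y"
    by simp
  then show ?thesis
    unfolding rho_def by (rule limI)
qed

lemma cont_conf_rho_override:
  assumes "finite L"
  shows "cont_conf (\<lambda>w. rho phi (override_on w z L) w)"
proof (rule cont_conf_uniform_limit[OF _ uniform_limit_partial_sum_rho[OF assms]])
  fix n
  have "cont_conf (\<lambda>w. phi (shift i (override_on w z L)))" for i
    using cont_conf_compose[OF cont continuous_map_compose[OF continuous_map_override_on continuous_map_shift]]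
    by (simp add: o_def)
  moreover have "cont_conf (\<lambda>w. phi (shift i w))" for i
    using cont_conf_compose[OF cont continuous_map_shift] .
  ultimately show "cont_conf (\<lambda>w. partial_sum phi (override_on w z L) w n)"
    unfolding partial_sum_def cont_conf_def by (intro continuous_map_sum continuous_map_diff) auto
qed

lemma gibbs_spec_exp_rho:
  assumes L: "finite L" and x: "x \<in> configs_on L w"
  shows "gibbs_spec phi L x = exp (rho phi x w) * gibbs_spec phi L w"
proof -
  have "(\<Sum>z\<in>configs_on L x. exp (rho phi z x))
      = exp (- rho phi x w) * (\<Sum>z\<in>configs_on L w. exp (rho phi z w))"
    unfolding configs_on_eq[OF x] sum_distrib_left
  proof (rule sum.cong[OF refl])
    fix z assume "z \<in> configs_on L w"
    then have "rho phi z w = rho phi z x + rho phi x w"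
      using rho_cocycle[OF L _ x] by simp
    then show "exp (rho phi z x) = exp (- rho phi x w) * exp (rho phi z w)"
      by (simp add: mult_exp_exp)
  qed
  then show ?thesis
    unfolding gibbs_spec_def by (simp add: exp_minus inverse_mult_distrib)
qed

lemma gibbs_spec_pos: "finite L \<Longrightarrow> gibbs_spec phi L w > 0"
  unfolding gibbs_spec_def
  by (intro positive_imp_inverse_positive sum_pos2[of _ w]) (auto simp: finite_configs_on)

lemma sum_gibbs_spec: "finite L \<Longrightarrow> (\<Sum>x\<in>configs_on L w. gibbs_spec phi L x) = 1"
  using gibbs_spec_pos[of L w]
  by (simp add: gibbs_spec_exp_rho sum_distrib_right[symmetric]) (simp add: gibbs_spec_def)

lemma gibbs_spec_detailed_balance:
  assumes L: "finite L" and DL: "D \<subseteq> L" and z: "z \<in> configs_on D x"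
  shows "gibbs_spec phi L x * gibbs_spec phi D z = gibbs_spec phi L z * gibbs_spec phi D x"
proof -
  have "finite D" "z \<in> configs_on L x"
    using L DL z configs_on_mono finite_subset by blast+
  then show ?thesis
    using gibbs_spec_exp_rho[OF L] gibbs_spec_exp_rho[of D z x] z configs_on_sym by (simp add: mult_ac)
qed

lemma is_specification_gibbs_spec: "is_specification (gibbs_spec phi)"
  by (rule is_specificationI_detailed_balance)
    (auto simp: gibbs_spec_pos less_imp_le sum_gibbs_spec intro: gibbs_spec_detailed_balance)

lemma gibbs_spec_override:
  "gibbs_spec phi L w = inverse (\<Sum>z\<in>PiE L (\<lambda>_. UNIV). exp (rho phi (override_on w z L) w))"
  unfolding gibbs_spec_def sum_configs_on ..

text \<open>The cocycle \<open>w \<mapsto> rho phi (override_on w z L) w\<close> is continuous on a compact space,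
  hence bounded, for each of the finitely many \<open>z\<close>.\<close>

lemma gibbs_spec_bounded_below:
  assumes L: "finite L"
  shows "\<exists>c>0. \<forall>w. c \<le> gibbs_spec phi L w"
proof -
  let ?P = "PiE L (\<lambda>_. UNIV :: 'e set)"
  obtain B where B: "\<And>z w. \<bar>rho phi (override_on w z L) w\<bar> \<le> B z"
    using cont_conf_bounded[OF cont_conf_rho_override[OF L]] by metis
  have "?P \<noteq> {}" "finite ?P"
    using L by (simp_all add: PiE_eq_empty_iff finite_PiE)
  then have pos: "0 < (\<Sum>z\<in>?P. exp (B z))"
    by (simp add: sum_pos)
  have "inverse (\<Sum>z\<in>?P. exp (B z)) \<le> gibbs_spec phi L w" for w
  proof -
    have "(\<Sum>z\<in>?P. exp (rho phi (override_on w z L) w)) \<le> (\<Sum>z\<in>?P. exp (B z))"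
      using B by (intro sum_mono) (simp add: abs_le_iff)
    moreover have "0 < (\<Sum>z\<in>?P. exp (rho phi (override_on w z L) w))"
      using gibbs_spec_pos[OF L, of w] by (simp add: gibbs_spec_override)
    ultimately show ?thesis
      unfolding gibbs_spec_override by (rule le_imp_inverse_le)
  qed
  with pos show ?thesis
    by (intro exI[of _ "inverse (\<Sum>z\<in>?P. exp (B z))"]) simp
qed

lemma cont_conf_gibbs_spec:
  assumes L: "finite L"
  shows "cont_conf (gibbs_spec phi L)"
proof -
  have "cont_conf (\<lambda>w. exp (rho phi (override_on w z L) w))" for z
    by (rule cont_conf_compose_continuous_on[OF cont_conf_rho_override[OF L] continuous_on_exp])
      (auto intro: continuous_on_id)
  moreover have "(\<Sum>z\<in>PiE L (\<lambda>_. UNIV). exp (rho phi (override_on w z L) w)) \<noteq> 0" for w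
    using gibbs_spec_pos[OF L, of w] by (simp add: gibbs_spec_override)
  ultimately show ?thesis
    unfolding gibbs_spec_override[abs_def] cont_conf_def
    by (intro continuous_map_real_inverse continuous_map_sum) (auto simp: finite_PiE L)
qed

lemma gibbsian_gibbs_spec: "gibbsian (gibbs_spec phi)"
  unfolding gibbsian_def
proof (intro conjI allI impI)
  fix L :: "int set" assume L: "finite L"
  then obtain c where "c > 0" "\<And>w. c \<le> gibbs_spec phi L w"
    using gibbs_spec_bounded_below by blast
  then show "(INF w. gibbs_spec phi L w) > 0"
    using cINF_greatest[of UNIV c "gibbs_spec phi L"] by fastforce
qed (rule cont_conf_gibbs_spec)

lemma transl_inv_gibbs_spec: "transl_inv (gibbs_spec phi)"
  unfolding transl_inv_def
proof (intro allI impI)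
  fix L :: "int set" and w :: "int \<Rightarrow> 'e" assume "finite L"
  then have L1: "finite ((\<lambda>i. i + 1) ` L)"
    by simp
  have "(\<Sum>y\<in>configs_on L (shift 1 w). exp (rho phi y (shift 1 w)))
      = (\<Sum>x\<in>configs_on ((\<lambda>i. i + 1) ` L) w. exp (rho phi (shift 1 x) (shift 1 w)))"
    by (rule sum.reindex_bij_betw[OF bij_betw_shift_configs_on, symmetric])
  also have "\<dots> = (\<Sum>x\<in>configs_on ((\<lambda>i. i + 1) ` L) w. exp (rho phi x w))"
    using rho_shift[OF L1] by simp
  finally show "gibbs_spec phi ((\<lambda>i. i + 1) ` L) w = gibbs_spec phi L (shift 1 w)"
    unfolding gibbs_spec_def by simp
qed

end

section \<open>The potential of a translation-invariant Gibbsian specification\<close>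

definition fill_left :: "'e \<Rightarrow> int \<Rightarrow> (int \<Rightarrow> 'e) \<Rightarrow> int \<Rightarrow> 'e" where
  "fill_left a i x = (\<lambda>k. if k < i then a else x k)"

lemma aleft_eq_fill_left: "aleft a = fill_left a 0"
  by (simp add: fun_eq_iff aleft_def fill_left_def)

lemma continuous_map_fill_left: "continuous_map conf_top conf_top (fill_left a i)"
  by (rule continuous_map_conf_top_coordinatewise) (auto simp: fill_left_def)

lemma uniform_limit_fill_left:
  fixes f :: "(int \<Rightarrow> 'e::finite) \<Rightarrow> real"
  assumes "cont_conf f"
  shows "uniform_limit UNIV (\<lambda>n w. f (fill_left a (- int n) w)) f sequentially"
proof (rule uniform_limitI)
  fix e :: real assume "e > 0"
  then obtain N where N: "\<And>x y. agree N x y \<Longrightarrow> \<bar>f x - f y\<bar> < e"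
    using cont_conf_uniform[OF assms] by blast
  have "agree N (fill_left a (- int n) w) w" if "n \<ge> N" for n w
    using that by (auto simp: agree_def fill_left_def)
  then show "\<forall>\<^sub>F n in sequentially. \<forall>w\<in>UNIV. dist (f (fill_left a (- int n) w)) (f w) < e"
    unfolding eventually_sequentially dist_real_def using N by blast
qed

locale ti_gibbsian_specification =
  fixes gam :: "int set \<Rightarrow> (int \<Rightarrow> 'e::finite) \<Rightarrow> real" and a :: 'e
  assumes spec: "is_specification gam" and gibbsian: "gibbsian gam" and ti: "transl_inv gam"
begin

lemma gam_pos:
  assumes "finite L"
  shows "gam L w > 0"
proof -
  have "bdd_below (range (gam L))"
    using spec assms unfolding is_specification_def by (intro bdd_belowI[of _ 0]) auto
  then have "(INF w. gam L w) \<le> gam L w"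
    by (rule cINF_lower) simp
  moreover have "(INF w. gam L w) > 0"
    using gibbsian assms unfolding gibbsian_def by blast
  ultimately show ?thesis
    by linarith
qed

lemma cont_conf_ln_gam:
  assumes "finite L" "continuous_map conf_top conf_top g"
  shows "cont_conf (\<lambda>w. ln (gam L (g w)))"
proof (rule cont_conf_compose_continuous_on[where f = "\<lambda>w. gam L (g w)" and h = ln and S = "{0<..}"])
  show "cont_conf (\<lambda>w. gam L (g w))"
    using gibbsian assms unfolding gibbsian_def by (blast intro: cont_conf_compose)
qed (use gam_pos[OF assms(1)] in \<open>auto intro: continuous_on_ln continuous_on_id\<close>)

lemma ln_gam_diff_restrict:
  assumes "finite L" "D \<subseteq> L" "y \<in> configs_on D x"
  shows "ln (gam L x) - ln (gam L y) = ln (gam D x) - ln (gam D y)"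
proof -
  have D: "finite D"
    using assms(1,2) by (rule finite_subset[rotated])
  have "ln (gam L x) + ln (gam D y) = ln (gam L x * gam D y)"
    by (rule ln_mult_pos[symmetric]) (simp_all add: gam_pos assms(1) D)
  also have "\<dots> = ln (gam L y) + ln (gam D x)"
    unfolding specification_detailed_balance[OF spec assms]
    by (rule ln_mult_pos) (simp_all add: gam_pos assms(1) D)
  finally show ?thesis
    by linarith
qed

text \<open>Translation invariance moves the single-site kernel from \<open>0\<close> to \<open>i\<close>, and consistency
  then replaces \<open>{i}\<close> by any finite volume containing \<open>i\<close>.\<close>

lemma phi_of_spec_shift:
  assumes "finite L" "i \<in> L"
  shows "phi_of_spec a gam (shift i x)
    = ln (gam L (fill_left a i x)) - ln (gam L (fill_left a (i + 1) x))"
proof -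
  have "aleft a (shift i x) = shift i (fill_left a i x)"
    "(aleft a (shift i x))(0 := a) = shift i (fill_left a (i + 1) x)"
    by (auto simp: aleft_def shift_def fill_left_def fun_eq_iff)
  then have "phi_of_spec a gam (shift i x)
      = ln (gam {i} (fill_left a i x) / gam {i} (fill_left a (i + 1) x))"
    unfolding phi_of_spec_def transl_inv_singleton[OF ti, of i] by simp
  also have "\<dots> = ln (gam {i} (fill_left a i x)) - ln (gam {i} (fill_left a (i + 1) x))"
    by (rule ln_divide_pos) (simp_all add: gam_pos)
  also have "\<dots> = ln (gam L (fill_left a i x)) - ln (gam L (fill_left a (i + 1) x))"
    by (rule ln_gam_diff_restrict[symmetric]) (use assms in \<open>auto simp: configs_on_def fill_left_def\<close>)
  finally show ?thesis .
qed

lemma partial_sum_phi_of_spec: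
  assumes D: "D \<subseteq> {- int n..int n}" and y: "y \<in> configs_on D x"
  shows "partial_sum (phi_of_spec a gam) x y n
    = ln (gam D (fill_left a (- int n) x)) - ln (gam D (fill_left a (- int n) y))"
proof -
  let ?L = "{- int n..int n}"
  let ?g = "\<lambda>v i. - ln (gam ?L (fill_left a i v))"
  have sum_eq: "(\<Sum>i\<in>?L. phi_of_spec a gam (shift i v)) = ?g v (int n + 1) - ?g v (- int n)" for v
  proof -
    have "(\<Sum>i\<in>?L. phi_of_spec a gam (shift i v)) = (\<Sum>i\<in>?L. ?g v (i + 1) - ?g v i)"
      by (intro sum.cong refl) (simp add: phi_of_spec_shift)
    also have "\<dots> = ?g v (int n + 1) - ?g v (- int n)"
      by (rule sum_atLeastAtMost_int_telescope[where g = "?g v"]) simp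
    finally show ?thesis .
  qed
  have "x k = y k" if "k \<ge> int n + 1" for k
  proof -
    have "k \<notin> D"
      using that D by auto
    then show ?thesis
      using y by (simp add: configs_on_def)
  qed
  then have "fill_left a (int n + 1) x = fill_left a (int n + 1) y"
    by (auto simp: fill_left_def)
  then have "partial_sum (phi_of_spec a gam) x y n
      = ln (gam ?L (fill_left a (- int n) x)) - ln (gam ?L (fill_left a (- int n) y))"
    unfolding partial_sum_def sum_subtractf sum_eq by simp
  also have "\<dots> = ln (gam D (fill_left a (- int n) x)) - ln (gam D (fill_left a (- int n) y))"
    by (rule ln_gam_diff_restrict) (use D y in \<open>auto simp: configs_on_def fill_left_def\<close>)
  finally show ?thesis .
qed

lemma cont_conf_phi_of_spec: "cont_conf (phi_of_spec a gam)"
proof -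
  have "phi_of_spec a gam w = ln (gam {0} (fill_left a 0 w)) - ln (gam {0} ((fill_left a 0 w)(0 := a)))" for w
    unfolding phi_of_spec_def aleft_eq_fill_left by (rule ln_divide_pos) (simp_all add: gam_pos)
  then have "phi_of_spec a gam = (\<lambda>w. ln (gam {0} (fill_left a 0 w)) - ln (gam {0} ((fill_left a 0 w)(0 := a))))"
    by (simp add: fun_eq_iff)
  moreover have "continuous_map conf_top conf_top (\<lambda>w. (fill_left a 0 w)(0 := a))"
    using continuous_map_compose[OF continuous_map_fill_left continuous_map_fun_upd] by (simp add: o_def)
  ultimately show ?thesis
    unfolding cont_conf_def
    by (simp add: continuous_map_diff cont_conf_ln_gam[unfolded cont_conf_def] continuous_map_fill_left)
qed

lemma extensible_phi_of_spec: "extensible (phi_of_spec a gam)"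
  unfolding extensible_def
proof (intro allI)
  fix b c :: 'e
  define psi where "psi v = ln (gam {0} (v(0 := b))) - ln (gam {0} (v(0 := c)))" for v
  have "(fill_left a (- int n) w)(0 := e) = fill_left a (- int n) (w(0 := e))" for n w e
    by (auto simp: fill_left_def fun_eq_iff)
  then have eq: "partial_sum (phi_of_spec a gam) (w(0 := b)) (w(0 := c)) n = psi (fill_left a (- int n) w)" for w n
    unfolding psi_def by (subst partial_sum_phi_of_spec) (auto simp: configs_on_def)
  have "cont_conf psi"
    unfolding psi_def cont_conf_def
    by (intro continuous_map_diff cont_conf_ln_gam[unfolded cont_conf_def] continuous_map_fun_upd) simp_all
  then have "uniform_limit UNIV (\<lambda>n w. psi (fill_left a (- int n) w)) psi sequentially"
    by (rule uniform_limit_fill_left)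
  then show "uniformly_convergent_on UNIV (\<lambda>n w. partial_sum (phi_of_spec a gam) (w(0 := b)) (w(0 := c)) n)"
    unfolding eq by (rule uniformly_convergentI)
qed

lemma rho_phi_of_spec:
  assumes L: "finite L" and x: "x \<in> configs_on L w"
  shows "rho (phi_of_spec a gam) x w = ln (gam L x) - ln (gam L w)"
proof -
  obtain N where N: "\<forall>i\<in>L. \<bar>i\<bar> \<le> int N"
    using finite_int_set_bounded[OF L] by blast
  let ?chi = "\<lambda>v. ln (gam L v)"
  have "cont_conf ?chi"
    using cont_conf_ln_gam[OF L continuous_map_id] by simp
  then have "(\<lambda>n. ?chi (fill_left a (- int n) x) - ?chi (fill_left a (- int n) w)) \<longlonglongrightarrow> ?chi x - ?chi w"
    by (intro tendsto_diff tendsto_uniform_limitI[OF uniform_limit_fill_left]) simp_all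
  moreover have "\<forall>\<^sub>F n in sequentially. ?chi (fill_left a (- int n) x) - ?chi (fill_left a (- int n) w)
      = partial_sum (phi_of_spec a gam) x w n"
    unfolding eventually_sequentially
  proof (intro exI[of _ N] allI impI)
    fix n assume "n \<ge> N"
    then have "L \<subseteq> {- int n..int n}"
      using N by force
    then show "?chi (fill_left a (- int n) x) - ?chi (fill_left a (- int n) w)
        = partial_sum (phi_of_spec a gam) x w n"
      using partial_sum_phi_of_spec[of L n w x] x configs_on_sym by metis
  qed
  ultimately have "partial_sum (phi_of_spec a gam) x w \<longlonglongrightarrow> ?chi x - ?chi w"
    by (rule Lim_transform_eventually)
  then show ?thesis
    unfolding rho_def by (rule limI)
qed

lemma gibbs_spec_phi_of_spec:
  assumes L: "finite L"
  shows "gibbs_spec (phi_of_spec a gam) L w = gam L w"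
proof -
  have "(\<Sum>x\<in>configs_on L w. exp (rho (phi_of_spec a gam) x w)) = (\<Sum>x\<in>configs_on L w. gam L x) / gam L w"
    unfolding sum_divide_distrib using gam_pos[OF L]
    by (intro sum.cong refl) (simp add: rho_phi_of_spec[OF L] exp_diff)
  also have "\<dots> = 1 / gam L w"
    using spec L unfolding is_specification_def by simp
  finally show ?thesis
    unfolding gibbs_spec_def by simp
qed

end

theorem theorem4p2:
  fixes a :: "'e::finite"
  shows "(\<forall>phi :: (int \<Rightarrow> 'e) \<Rightarrow> real. cont_conf phi \<and> extensible phi \<longrightarrow>
            is_specification (gibbs_spec phi) \<and> gibbsian (gibbs_spec phi) \<and> transl_inv (gibbs_spec phi))
       \<and> (\<forall>gam :: int set \<Rightarrow> (int \<Rightarrow> 'e) \<Rightarrow> real.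
            is_specification gam \<and> gibbsian gam \<and> transl_inv gam \<longrightarrow>
            cont_conf (phi_of_spec a gam) \<and> extensible (phi_of_spec a gam) \<and>
            (\<forall>L w. finite L \<longrightarrow> gibbs_spec (phi_of_spec a gam) L w = gam L w))"
proof (intro conjI allI impI; elim conjE)
  fix phi :: "(int \<Rightarrow> 'e) \<Rightarrow> real"
  assume "cont_conf phi" "extensible phi"
  then interpret extensible_potential phi
    by unfold_locales
  show "is_specification (gibbs_spec phi)" "gibbsian (gibbs_spec phi)" "transl_inv (gibbs_spec phi)"
    by (fact is_specification_gibbs_spec gibbsian_gibbs_spec transl_inv_gibbs_spec)+
next
  fix gam :: "int set \<Rightarrow> (int \<Rightarrow> 'e) \<Rightarrow> real"
  assume "is_specification gam" "gibbsian gam" "transl_inv gam"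
  then interpret ti_gibbsian_specification gam a
    by unfold_locales
  show "cont_conf (phi_of_spec a gam)" "extensible (phi_of_spec a gam)"
    by (fact cont_conf_phi_of_spec extensible_phi_of_spec)+
  show "gibbs_spec (phi_of_spec a gam) L w = gam L w" if "finite L" for L w
    using that by (rule gibbs_spec_phi_of_spec)
qed

end
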